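(* For every $n\in\mathbb{Z}^+$ we have $$N(1,1,6;2n)=N(1,1,3;n),\qquad t(1,1,6;8n+4)=2t(1,1,3;n),\qquad t(1,1,6;32n+19)=4t(1,1,3;n).$$ Moreover, for every $n\in\mathbb{Z}^+$ with $n\not\equiv 15\pmod{16}$ we have $$t(1,1,6;n)=\begin{cases} 4N(1,1,3;n+1)&\text{if } n\equiv 1,2\pmod 4,\\ 2N(1,1,3;n+1)&\text{if } n\equiv 0\pmod 8,\\ N(1,1,3;n+1)&\text{if } n\equiv 4\pmod 8 \text{ or } n\equiv 19\pmod{32},\\ \frac 85N(1,1,3;n+1)&\text{if } n\equiv 7,11\pmod{16},\\ \frac 43N(1,1,3;n+1)&\text{if } n\equiv 3\pmod{32}.\end{cases}$$
   Context: $\mathbb{Z}^+$ is the set of positive integers. For $a,b,c\in\mathbb{Z}^+$ and nonnegative integer $n$, $N(a,b,c;n)$ denotes the number of triples $(x,y,z)\in\mathbb{Z}^3$ with $n=ax^2+by^2+cz^2$, and $t(a,b,c;n)$ denotes the number of triples $(x,y,z)\in\mathbb{Z}^3$ with $n=a\frac{x(x+1)}2+b\frac{y(y+1)}2+c\frac{z(z+1)}2$. *)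

theory Defs
  imports Complex_Main
begin

definition N :: "int \<Rightarrow> int \<Rightarrow> int \<Rightarrow> int \<Rightarrow> nat" where
  "N a b c n = card {(x::int, y::int, z::int). n = a * x^2 + b * y^2 + c * z^2}"

definition t :: "int \<Rightarrow> int \<Rightarrow> int \<Rightarrow> int \<Rightarrow> nat" where
  "t a b c n = card {(x::int, y::int, z::int).
     n = a * (x * (x + 1) div 2) + b * (y * (y + 1) div 2) + c * (z * (z + 1) div 2)}"

end

(* Let r(m) = N(1,1,3;m) and let M(m) count the representations m = x^2 + y^2 + 3z^2 with y + z odd.
   The substitution (x, y) -> ((x + y)/2, (x - y)/2) gives N(1,1,6;2n) = r(n), and
   (x, y, z) -> (2x + 1, 2y + 1, 2z + 1) identifies t(a,b,c;k) with the representations of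
   8k + a + b + c by ax^2 + by^2 + cz^2 in odd integers. A representation of 8(n + 1) by
   x^2 + y^2 + 6z^2 is either all odd or all even, so t(1,1,6;n) = r(4(n + 1)) - r(n + 1).
   For m = x^2 + y^2 + 3z^2 the parities of x, y, z are constrained by m mod 8. Together with the
   symmetry x <-> y, halving of all-even representations of 4m, and the norm-preserving rotation
   (y, z) -> ((y - 3z)/2, (y + z)/2), this yields r(4m) = r(m) + 4M(m), M(4m) = 2M(m),
   t(1,1,3;n) = 2M(8n + 5), and r(m) = M(m), 2M(m), 4M(m) for m = 2, 3 (mod 4), m = 1 (mod 8),
   m = 5 (mod 8) respectively. Hence t(1,1,6;n) = 4M(n + 1), and each identity of the theorem
   reduces to these relations. *)

theory Submission
  imports Defs
begin

definition reps :: "int \<Rightarrow> int \<Rightarrow> int \<Rightarrow> int \<Rightarrow> (int \<Rightarrow> int \<Rightarrow> int \<Rightarrow> bool) \<Rightarrow> (int \<times> int \<times> int) set"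
  where "reps a b c n P = {(x, y, z). n = a * x^2 + b * y^2 + c * z^2 \<and> P x y z}"

lemma N_eq_card_reps: "N a b c n = card (reps a b c n (\<lambda>_ _ _. True))"
  by (simp add: N_def reps_def)

lemma abs_le_mult_square:
  assumes "d > 0"
  shows "\<bar>u\<bar> \<le> d * (u::int)^2"
proof (cases "u = 0")
  case False
  then have "\<bar>u\<bar> * 1 \<le> \<bar>u\<bar> * \<bar>u\<bar>" by (intro mult_left_mono) auto
  also have "\<dots> = 1 * u^2" by (simp add: power2_eq_square abs_mult_self_eq)
  also have "\<dots> \<le> d * u^2" using assms by (intro mult_right_mono) auto
  finally show ?thesis by simp
qed simp

lemma finite_reps:
  assumes "a > 0" "b > 0" "c > 0"
  shows "finite (reps a b c n P)"
proof (rule finite_subset)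
  show "reps a b c n P \<subseteq> {-\<bar>n\<bar>..\<bar>n\<bar>} \<times> {-\<bar>n\<bar>..\<bar>n\<bar>} \<times> {-\<bar>n\<bar>..\<bar>n\<bar>}"
  proof
    fix v assume "v \<in> reps a b c n P"
    then obtain x y z where v: "v = (x, y, z)" and "n = a * x^2 + b * y^2 + c * z^2"
      by (auto simp: reps_def)
    moreover have "\<bar>x\<bar> \<le> a * x^2" "\<bar>y\<bar> \<le> b * y^2" "\<bar>z\<bar> \<le> c * z^2"
      using assms by (simp_all add: abs_le_mult_square)
    moreover have "0 \<le> a * x^2" "0 \<le> b * y^2" "0 \<le> c * z^2"
      using assms by simp_all
    ultimately show "v \<in> {-\<bar>n\<bar>..\<bar>n\<bar>} \<times> {-\<bar>n\<bar>..\<bar>n\<bar>} \<times> {-\<bar>n\<bar>..\<bar>n\<bar>}"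
      by (auto simp: abs_le_iff)
  qed
qed simp

lemma card_reps_split:
  assumes "a > 0" "b > 0" "c > 0"
  shows "card (reps a b c n P) =
    card (reps a b c n (\<lambda>x y z. P x y z \<and> Q x y z)) + card (reps a b c n (\<lambda>x y z. P x y z \<and> \<not> Q x y z))"
proof -
  have "reps a b c n P = reps a b c n (\<lambda>x y z. P x y z \<and> Q x y z) \<union> reps a b c n (\<lambda>x y z. P x y z \<and> \<not> Q x y z)"
    by (auto simp: reps_def)
  moreover have "reps a b c n (\<lambda>x y z. P x y z \<and> Q x y z) \<inter> reps a b c n (\<lambda>x y z. P x y z \<and> \<not> Q x y z) = {}"
    by (auto simp: reps_def)
  ultimately show ?thesis
    by (simp add: card_Un_disjoint finite_reps assms)
qed

lemma reps_cong:
  assumes "\<And>x y z. n = a * x^2 + b * y^2 + c * z^2 \<Longrightarrow> P x y z \<longleftrightarrow> Q x y z"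
  shows "reps a b c n P = reps a b c n Q"
  using assms by (auto simp: reps_def)

lemma card_eq_by_inverses:
  assumes "\<And>u. u \<in> A \<Longrightarrow> f u \<in> B \<and> g (f u) = u" "\<And>v. v \<in> B \<Longrightarrow> g v \<in> A \<and> f (g v) = v"
  shows "card A = card B"
  by (rule bij_betw_same_card[OF bij_betw_byWitness[where f' = g]]) (use assms in auto)

lemma card_reps_swap: "card (reps a a c n P) = card (reps a a c n (\<lambda>x y z. P y x z))"
  by (rule card_eq_by_inverses[where f = "\<lambda>(x, y, z). (y, x, z)" and g = "\<lambda>(x, y, z). (y, x, z)"])
    (auto simp: reps_def)

lemma card_reps_neg_y: "card (reps a b c n P) = card (reps a b c n (\<lambda>x y z. P x (- y) z))"
  by (rule card_eq_by_inverses[where f = "\<lambda>(x, y, z). (x, - y, z)" and g = "\<lambda>(x, y, z). (x, - y, z)"])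
    (auto simp: reps_def)

lemma card_reps_4_even:
  "card (reps a b c (4 * m) (\<lambda>x y z. even x \<and> even y \<and> even z \<and> Q (x div 2) (y div 2) (z div 2)))
    = card (reps a b c m Q)"
proof (rule card_eq_by_inverses[where f = "\<lambda>(x, y, z). (x div 2, y div 2, z div 2)"
                                   and g = "\<lambda>(x, y, z). (2 * x, 2 * y, 2 * z)"], goal_cases)
  case (1 u)
  then obtain x y z where "u = (2 * x, 2 * y, 2 * z)"
      "4 * m = a * (2 * x)^2 + b * (2 * y)^2 + c * (2 * z)^2" "Q x y z"
    by (auto simp: reps_def elim!: evenE)
  then show ?case
    by (auto simp: reps_def power_mult_distrib)
next
  case (2 v)
  then show ?case
    by (auto simp: reps_def power_mult_distrib)
qed

lemma triangular_square: "(2 * x + 1)^2 = 8 * (x * (x + 1) div 2) + (1::int)"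
proof -
  have "x * (x + 1) = 2 * (x * (x + 1) div 2)" by simp
  moreover have "(2 * x + 1)^2 = 4 * (x * (x + 1)) + 1" by algebra
  ultimately show ?thesis by linarith
qed

lemma t_eq_card_odd_reps:
  "t a b c k = card (reps a b c (8 * k + a + b + c) (\<lambda>x y z. odd x \<and> odd y \<and> odd z))"
  unfolding t_def
proof (rule card_eq_by_inverses[where f = "\<lambda>(x, y, z). (2 * x + 1, 2 * y + 1, 2 * z + 1)"
                                   and g = "\<lambda>(x, y, z). (x div 2, y div 2, z div 2)"], goal_cases)
  case (1 u)
  then obtain x y z where u: "u = (x, y, z)"
      and k: "k = a * (x * (x + 1) div 2) + b * (y * (y + 1) div 2) + c * (z * (z + 1) div 2)"
    by auto
  have "8 * k + a + b + c = a * (2 * x + 1)^2 + b * (2 * y + 1)^2 + c * (2 * z + 1)^2"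
    unfolding triangular_square k by (simp add: algebra_simps)
  then show ?case
    using u by (simp add: reps_def)
next
  case (2 v)
  then obtain x y z where v: "v = (2 * x + 1, 2 * y + 1, 2 * z + 1)"
      and "8 * k + a + b + c = a * (2 * x + 1)^2 + b * (2 * y + 1)^2 + c * (2 * z + 1)^2"
    by (auto simp: reps_def elim!: oddE)
  then have "8 * k = 8 * (a * (x * (x + 1) div 2) + b * (y * (y + 1) div 2) + c * (z * (z + 1) div 2))"
    unfolding triangular_square by (simp add: algebra_simps)
  then show ?case
    using v by simp
qed

lemma power2_mod_4: "(x::int)^2 mod 4 = x mod 2"
proof (cases "even x")
  case True
  then obtain k where "x = 2 * k" by blast
  then show ?thesis by (simp add: power2_eq_square)
next
  case False
  then obtain k where "x = 2 * k + 1" using oddE by blast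
  then have "x^2 = 4 * (k^2 + k) + 1" by algebra
  then show ?thesis using False by (simp add: mod_simps) presburger
qed

lemma odd_power2_mod_8:
  assumes "odd (x::int)"
  shows "x^2 mod 8 = 1"
proof -
  obtain k where "x = 2 * k + 1" using assms oddE by blast
  then have "x^2 = 8 * (k * (k + 1) div 2) + 1" using triangular_square by simp
  then show ?thesis by simp
qed

lemma reps_1_1_3_parity:
  fixes x y z :: int
  assumes n: "n = x^2 + y^2 + 3 * z^2"
  shows "(n mod 4 = 0 \<longrightarrow> (even x \<and> even y \<and> even z) \<or> (odd x \<and> even y \<and> odd z) \<or> (even x \<and> odd y \<and> odd z)) \<and>
    (n mod 4 = 1 \<longrightarrow> (odd x \<and> even y \<and> even z) \<or> (even x \<and> odd y \<and> even z) \<or> (odd x \<and> odd y \<and> odd z)) \<and>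
    (n mod 4 = 2 \<longrightarrow> odd x \<and> odd y \<and> even z) \<and>
    (n mod 4 = 3 \<longrightarrow> even x \<and> even y \<and> odd z) \<and>
    (odd x \<and> odd y \<and> odd z \<longrightarrow> n mod 8 = 5) \<and>
    (odd x \<and> even y \<and> even z \<longrightarrow> (n mod 8 = 5 \<longleftrightarrow> odd (y div 2 + z div 2)))"
proof -
  have mod4: "n mod 4 = (x mod 2 + y mod 2 + 3 * (z mod 2)) mod 4"
    unfolding n power2_mod_4[symmetric] by (intro mod_add_cong) (simp_all add: mod_simps)
  then have parity_mod_4:
    "(n mod 4 = 0 \<longrightarrow> (even x \<and> even y \<and> even z) \<or> (odd x \<and> even y \<and> odd z) \<or> (even x \<and> odd y \<and> odd z)) \<and>
     (n mod 4 = 1 \<longrightarrow> (odd x \<and> even y \<and> even z) \<or> (even x \<and> odd y \<and> even z) \<or> (odd x \<and> odd y \<and> odd z)) \<and>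
     (n mod 4 = 2 \<longrightarrow> odd x \<and> odd y \<and> even z) \<and>
     (n mod 4 = 3 \<longrightarrow> even x \<and> even y \<and> odd z)"
    by (auto simp: mod2_eq_if split: if_splits)
  have "n mod 8 = (x^2 mod 8 + y^2 mod 8 + 3 * (z^2 mod 8)) mod 8"
    unfolding n by (intro mod_add_cong) (simp_all add: mod_simps)
  then have odd_odd_odd: "odd x \<and> odd y \<and> odd z \<longrightarrow> n mod 8 = 5"
    by (simp add: odd_power2_mod_8)
  have "n mod 8 = 5 \<longleftrightarrow> odd (y div 2 + z div 2)" if "odd x" "y = 2 * p" "z = 2 * q" for p q
  proof -
    have "n = x^2 + 4 * (p^2 + 3 * q^2)"
      unfolding n using that by (simp add: power_mult_distrib)
    then have "n mod 8 = (x^2 mod 8 + 4 * (p^2 + 3 * q^2)) mod 8"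
      by (simp add: mod_simps)
    then have "n mod 8 = (1 + 4 * (p^2 + 3 * q^2)) mod 8"
      using odd_power2_mod_8 \<open>odd x\<close> by simp
    moreover have "(1 + 4 * w) mod 8 = 5 \<longleftrightarrow> odd w" for w :: int
      by presburger
    ultimately have "n mod 8 = 5 \<longleftrightarrow> odd (p^2 + 3 * q^2)"
      by (simp only:)
    then show ?thesis
      using that by simp
  qed
  then show ?thesis
    using parity_mod_4 odd_odd_odd by (auto elim!: evenE)
qed

definition mixed_reps :: "int \<Rightarrow> nat"
  where "mixed_reps m = card (reps 1 1 3 m (\<lambda>x y z. odd (y + z)))"

lemma card_reps_1_1_3_cong:
  assumes "\<And>x y z. n = x^2 + y^2 + 3 * z^2 \<Longrightarrow> P x y z \<longleftrightarrow> Q x y z"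
  shows "card (reps 1 1 3 n P) = card (reps 1 1 3 n Q)"
  using reps_cong[of n 1 1 3 P Q] assms by simp

lemma N_1_1_3_mod_4_2_3:
  assumes "m mod 4 = 2 \<or> m mod 4 = 3"
  shows "N 1 1 3 m = mixed_reps m"
  unfolding N_eq_card_reps mixed_reps_def
  by (rule card_reps_1_1_3_cong, drule reps_1_1_3_parity) (use assms in auto)

(* ((y - 3z) + (y + z) sqrt(-3))/2 = (y + z sqrt(-3)) (1 + sqrt(-3))/2 is multiplication by a unit,
   so the map preserves y^2 + 3z^2. *)
lemma card_reps_1_1_3_rotate:
  "card (reps 1 1 3 n (\<lambda>x y z. P x \<and> odd y \<and> odd z \<and> even ((y + z) div 2))) =
   card (reps 1 1 3 n (\<lambda>x y z. P x \<and> even y \<and> even z \<and> odd (y div 2 + z div 2)))"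
proof (rule card_eq_by_inverses[where f = "\<lambda>(x, y, z). (x, (y - 3 * z) div 2, (y + z) div 2)"
                                   and g = "\<lambda>(x, y, z). (x, (y + 3 * z) div 2, (z - y) div 2)"], goal_cases)
  case (1 w)
  then obtain x y z where w: "w = (x, y, z)" "n = x^2 + y^2 + 3 * z^2" "P x"
      and yz: "odd y" "odd z" "even ((y + z) div 2)"
    by (auto simp: reps_def)
  obtain a c where "y = 2 * a + 1" "z = 2 * c + 1"
    using yz by (auto elim!: oddE)
  moreover from calculation have "(y + z) div 2 = a + c + 1"
    by simp
  with yz obtain s where "a + c + 1 = 2 * s"
    by (metis evenE)
  ultimately have y: "y = 4 * s - 2 * c - 1" and z: "z = 2 * c + 1"
    by simp_all
  define u v where "u = 2 * (s - 2 * c - 1)" and "v = 2 * s"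
  have "y - 3 * z = 2 * u" "y + z = 2 * v" "u + 3 * v = 2 * y" "v - u = 2 * z"
    unfolding u_def v_def y z by simp_all
  moreover have "y^2 + 3 * z^2 = u^2 + 3 * v^2"
    unfolding u_def v_def y z by algebra
  moreover have "odd (u div 2 + v div 2)"
    unfolding u_def v_def by simp
  ultimately show ?case
    using w by (simp add: reps_def u_def v_def)
next
  case (2 w)
  then obtain x p q where w: "w = (x, 2 * p, 2 * q)" "n = x^2 + (2 * p)^2 + 3 * (2 * q)^2" "P x" "odd (p + q)"
    by (auto simp: reps_def elim!: evenE)
  have "(2 * p)^2 + 3 * (2 * q)^2 = (p + 3 * q)^2 + 3 * (q - p)^2" by algebra
  moreover have "odd (p + 3 * q)" "odd (q - p)" "(p + 3 * q + (q - p)) div 2 = 2 * q"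
    using \<open>odd (p + q)\<close> by simp_all
  ultimately show ?case
    using w by (simp add: reps_def)
qed

(* For odd y and z, negating y flips the parity of (y + z)/2, so both halves of the split have
   the same size. *)
lemma card_reps_1_1_3_odd_yz:
  "card (reps 1 1 3 n (\<lambda>x y z. P x \<and> odd y \<and> odd z)) =
   2 * card (reps 1 1 3 n (\<lambda>x y z. P x \<and> even y \<and> even z \<and> odd (y div 2 + z div 2)))"
proof -
  have "card (reps 1 1 3 n (\<lambda>x y z. P x \<and> odd y \<and> odd z \<and> odd ((y + z) div 2)))
      = card (reps 1 1 3 n (\<lambda>x y z. P x \<and> odd (- y) \<and> odd z \<and> odd ((- y + z) div 2)))"
    by (rule card_reps_neg_y)
  also have "\<dots> = card (reps 1 1 3 n (\<lambda>x y z. P x \<and> odd y \<and> odd z \<and> even ((y + z) div 2)))"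
  proof (rule arg_cong[where f = card], rule reps_cong)
    have "odd ((- y + z) div 2) \<longleftrightarrow> even ((y + z) div 2)" if "odd y" "odd z" for y z :: int
    proof -
      obtain a c where "y = 2 * a + 1" "z = 2 * c + 1"
        using \<open>odd y\<close> \<open>odd z\<close> by (auto elim!: oddE)
      then have "- y + z = 2 * (c - a)" "y + z = 2 * (a + c + 1)"
        by simp_all
      then show ?thesis by auto
    qed
    then show "P x \<and> odd (- y) \<and> odd z \<and> odd ((- y + z) div 2) \<longleftrightarrow> P x \<and> odd y \<and> odd z \<and> even ((y + z) div 2)"
      for x y z :: int by auto
  qed
  finally have "card (reps 1 1 3 n (\<lambda>x y z. P x \<and> odd y \<and> odd z))
      = 2 * card (reps 1 1 3 n (\<lambda>x y z. P x \<and> odd y \<and> odd z \<and> even ((y + z) div 2)))"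
    using card_reps_split[of 1 1 3 n "\<lambda>x y z. P x \<and> odd y \<and> odd z" "\<lambda>x y z. even ((y + z) div 2)"]
    by (simp add: conj_assoc)
  then show ?thesis
    by (simp add: card_reps_1_1_3_rotate)
qed

lemma card_reps_1_1_3_mult_4_odd_y: "card (reps 1 1 3 (4 * m) (\<lambda>x y z. odd y)) = 2 * mixed_reps m"
proof -
  have "card (reps 1 1 3 (4 * m) (\<lambda>x y z. odd y)) = card (reps 1 1 3 (4 * m) (\<lambda>x y z. True \<and> odd y \<and> odd z))"
    by (rule card_reps_1_1_3_cong, drule reps_1_1_3_parity) auto
  also have "\<dots> = 2 * card (reps 1 1 3 (4 * m) (\<lambda>x y z. True \<and> even y \<and> even z \<and> odd (y div 2 + z div 2)))"
    by (rule card_reps_1_1_3_odd_yz)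
  also have "card (reps 1 1 3 (4 * m) (\<lambda>x y z. True \<and> even y \<and> even z \<and> odd (y div 2 + z div 2)))
      = card (reps 1 1 3 (4 * m) (\<lambda>x y z. even x \<and> even y \<and> even z \<and> odd (y div 2 + z div 2)))"
    by (rule card_reps_1_1_3_cong, drule reps_1_1_3_parity) auto
  also have "\<dots> = mixed_reps m"
    unfolding mixed_reps_def by (rule card_reps_4_even)
  finally show ?thesis .
qed

lemma mixed_reps_mult_4: "mixed_reps (4 * m) = 2 * mixed_reps m"
proof -
  have "mixed_reps (4 * m) = card (reps 1 1 3 (4 * m) (\<lambda>x y z. odd x))"
    unfolding mixed_reps_def by (rule card_reps_1_1_3_cong, drule reps_1_1_3_parity) auto
  also have "\<dots> = card (reps 1 1 3 (4 * m) (\<lambda>x y z. odd y))"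
    by (rule card_reps_swap)
  finally show ?thesis
    by (simp add: card_reps_1_1_3_mult_4_odd_y)
qed

lemma N_1_1_3_mult_4: "N 1 1 3 (4 * m) = N 1 1 3 m + 4 * mixed_reps m"
proof -
  have "N 1 1 3 (4 * m) = card (reps 1 1 3 (4 * m) (\<lambda>x y z. odd x))
      + card (reps 1 1 3 (4 * m) (\<lambda>x y z. even x \<and> odd y))
      + card (reps 1 1 3 (4 * m) (\<lambda>x y z. even x \<and> even y))"
    using card_reps_split[of 1 1 3 "4 * m" "\<lambda>_ _ _. True" "\<lambda>x y z. odd x"]
      card_reps_split[of 1 1 3 "4 * m" "\<lambda>x y z. even x" "\<lambda>x y z. odd y"]
    by (simp add: N_eq_card_reps)
  moreover have "card (reps 1 1 3 (4 * m) (\<lambda>x y z. odd x)) = card (reps 1 1 3 (4 * m) (\<lambda>x y z. odd y))"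
    by (rule card_reps_swap)
  moreover have "card (reps 1 1 3 (4 * m) (\<lambda>x y z. even x \<and> odd y)) = card (reps 1 1 3 (4 * m) (\<lambda>x y z. odd y))"
    by (rule card_reps_1_1_3_cong, drule reps_1_1_3_parity) auto
  moreover have "card (reps 1 1 3 (4 * m) (\<lambda>x y z. even x \<and> even y))
      = card (reps 1 1 3 (4 * m) (\<lambda>x y z. even x \<and> even y \<and> even z \<and> True))"
    by (rule card_reps_1_1_3_cong, drule reps_1_1_3_parity) auto
  moreover have "\<dots> = N 1 1 3 m"
    using card_reps_4_even[of 1 1 3 m "\<lambda>_ _ _. True"] by (simp add: N_eq_card_reps)
  ultimately show ?thesis
    by (simp add: card_reps_1_1_3_mult_4_odd_y)
qed

lemma N_1_1_3_mod_8_1: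
  assumes "m mod 8 = 1"
  shows "N 1 1 3 m = 2 * mixed_reps m"
proof -
  have m: "m mod 4 = 1" "m mod 8 \<noteq> 5" using assms by presburger+
  have "N 1 1 3 m = card (reps 1 1 3 m (\<lambda>x y z. odd x)) + card (reps 1 1 3 m (\<lambda>x y z. even x))"
    using card_reps_split[of 1 1 3 m "\<lambda>_ _ _. True" "\<lambda>x y z. odd x"] by (simp add: N_eq_card_reps)
  moreover have "card (reps 1 1 3 m (\<lambda>x y z. odd x)) = card (reps 1 1 3 m (\<lambda>x y z. odd y))"
    by (rule card_reps_swap)
  moreover have "card (reps 1 1 3 m (\<lambda>x y z. odd y)) = mixed_reps m"
    unfolding mixed_reps_def by (rule card_reps_1_1_3_cong, drule reps_1_1_3_parity) (use m in auto)
  moreover have "card (reps 1 1 3 m (\<lambda>x y z. even x)) = mixed_reps m"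
    unfolding mixed_reps_def by (rule card_reps_1_1_3_cong, drule reps_1_1_3_parity) (use m in auto)
  ultimately show ?thesis by simp
qed

lemma N_1_1_3_mod_8_5:
  assumes "m mod 8 = 5"
  shows "N 1 1 3 m = 4 * mixed_reps m"
    and "card (reps 1 1 3 m (\<lambda>x y z. odd x \<and> odd y \<and> odd z)) = 2 * mixed_reps m"
proof -
  have m: "m mod 4 = 1" using assms by presburger
  have even_x: "card (reps 1 1 3 m (\<lambda>x y z. even x)) = mixed_reps m"
    unfolding mixed_reps_def by (rule card_reps_1_1_3_cong, drule reps_1_1_3_parity) (use m in auto)
  have odd_x_even_y: "card (reps 1 1 3 m (\<lambda>x y z. odd x \<and> even y)) = mixed_reps m"
  proof -
    have "card (reps 1 1 3 m (\<lambda>x y z. odd x \<and> even y)) = card (reps 1 1 3 m (\<lambda>x y z. odd y \<and> even x))"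
      by (rule card_reps_swap)
    also have "\<dots> = card (reps 1 1 3 m (\<lambda>x y z. even x))"
      by (rule card_reps_1_1_3_cong, drule reps_1_1_3_parity) (use m in auto)
    finally show ?thesis using even_x by simp
  qed
  have "card (reps 1 1 3 m (\<lambda>x y z. odd x \<and> odd y \<and> odd z))
      = 2 * card (reps 1 1 3 m (\<lambda>x y z. odd x \<and> even y \<and> even z \<and> odd (y div 2 + z div 2)))"
    by (rule card_reps_1_1_3_odd_yz)
  also have "card (reps 1 1 3 m (\<lambda>x y z. odd x \<and> even y \<and> even z \<and> odd (y div 2 + z div 2)))
      = card (reps 1 1 3 m (\<lambda>x y z. odd x \<and> even y))"
    by (rule card_reps_1_1_3_cong, drule reps_1_1_3_parity) (use assms m in auto)
  finally show odd_odd_odd: "card (reps 1 1 3 m (\<lambda>x y z. odd x \<and> odd y \<and> odd z)) = 2 * mixed_reps m"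
    using odd_x_even_y by simp
  have "N 1 1 3 m = card (reps 1 1 3 m (\<lambda>x y z. odd x \<and> odd y))
      + card (reps 1 1 3 m (\<lambda>x y z. odd x \<and> even y)) + card (reps 1 1 3 m (\<lambda>x y z. even x))"
    using card_reps_split[of 1 1 3 m "\<lambda>_ _ _. True" "\<lambda>x y z. odd x"]
      card_reps_split[of 1 1 3 m "\<lambda>x y z. odd x" "\<lambda>x y z. odd y"]
    by (simp add: N_eq_card_reps)
  moreover have "card (reps 1 1 3 m (\<lambda>x y z. odd x \<and> odd y)) = card (reps 1 1 3 m (\<lambda>x y z. odd x \<and> odd y \<and> odd z))"
    by (rule card_reps_1_1_3_cong, drule reps_1_1_3_parity) (use m in auto)
  ultimately show "N 1 1 3 m = 4 * mixed_reps m"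
    using odd_odd_odd even_x odd_x_even_y by simp
qed

lemma N_1_1_double: "N 1 1 (2 * c) (2 * n) = N 1 1 c n"
  unfolding N_eq_card_reps
proof (rule card_eq_by_inverses[where f = "\<lambda>(x, y, z). ((x + y) div 2, (x - y) div 2, z)"
                                   and g = "\<lambda>(a, b, z). (a + b, a - b, z)"], goal_cases)
  case (1 w)
  then obtain x y z where w: "w = (x, y, z)" and n: "2 * n = x^2 + y^2 + 2 * c * z^2"
    by (auto simp: reps_def)
  then have "x^2 + y^2 = 2 * (n - c * z^2)"
    by simp
  then have "even (x + y)"
    by (metis dvd_triv_left even_add even_power zero_less_numeral)
  then obtain s where s: "x + y = 2 * s" ..
  then have y: "y = 2 * s - x"
    by simp
  have "x - y = 2 * (x - s)" "2 * n = 2 * (s^2 + (x - s)^2 + c * z^2)"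
    unfolding n y by (simp_all add: power2_eq_square algebra_simps)
  with s show ?case
    using w y by (simp add: reps_def)
next
  case (2 w)
  then obtain a b z where w: "w = (a, b, z)" and "n = a^2 + b^2 + c * z^2"
    by (auto simp: reps_def)
  then have "2 * n = (a + b)^2 + (a - b)^2 + 2 * c * z^2"
    by (simp add: power2_eq_square algebra_simps)
  then show ?case
    using w by (simp add: reps_def)
qed

lemma reps_1_1_6_parity:
  fixes x y z :: int
  assumes "n = x^2 + y^2 + 6 * z^2" "n mod 4 = 0"
  shows "(odd x \<and> odd y \<and> odd z) \<or> (even x \<and> even y \<and> even z)"
proof -
  have "n mod 4 = (x mod 2 + y mod 2 + 6 * (z mod 2)) mod 4"
    unfolding assms(1) power2_mod_4[symmetric] by (intro mod_add_cong) (simp_all add: mod_simps)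
  then show ?thesis
    using assms(2) by (auto simp: mod2_eq_if split: if_splits)
qed

lemma t_1_1_6_eq_mixed_reps: "t 1 1 6 n = 4 * mixed_reps (n + 1)"
proof -
  have "N 1 1 3 (4 * (n + 1)) = N 1 1 6 (8 * n + 8)"
    using N_1_1_double[of 3 "4 * (n + 1)"] by simp
  also have "\<dots> = card (reps 1 1 6 (8 * n + 8) (\<lambda>x y z. odd x \<and> odd y \<and> odd z))
      + card (reps 1 1 6 (4 * (2 * (n + 1))) (\<lambda>x y z. even x \<and> even y \<and> even z \<and> True))"
  proof -
    have "reps 1 1 6 (8 * n + 8) (\<lambda>x y z. odd x) = reps 1 1 6 (8 * n + 8) (\<lambda>x y z. odd x \<and> odd y \<and> odd z)"
      by (rule reps_cong, simp, drule reps_1_1_6_parity) auto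
    moreover have "reps 1 1 6 (8 * n + 8) (\<lambda>x y z. \<not> odd x) = reps 1 1 6 (8 * n + 8) (\<lambda>x y z. even x \<and> even y \<and> even z \<and> True)"
      by (rule reps_cong, simp, drule reps_1_1_6_parity) auto
    ultimately show ?thesis
      using card_reps_split[of 1 1 6 "8 * n + 8" "\<lambda>_ _ _. True" "\<lambda>x y z. odd x"]
      by (simp add: N_eq_card_reps algebra_simps)
  qed
  also have "\<dots> = t 1 1 6 n + N 1 1 3 (n + 1)"
    using t_eq_card_odd_reps[of 1 1 6 n] card_reps_4_even[of 1 1 6 "2 * (n + 1)" "\<lambda>_ _ _. True"]
      N_1_1_double[of 3 "n + 1"]
    by (simp add: N_eq_card_reps add.assoc)
  finally show ?thesis
    using N_1_1_3_mult_4[of "n + 1"] by simp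
qed

lemma t_1_1_3_eq_mixed_reps: "t 1 1 3 n = 2 * mixed_reps (8 * n + 5)"
  using t_eq_card_odd_reps[of 1 1 3 n] N_1_1_3_mod_8_5(2)[of "8 * n + 5"] by (simp add: ac_simps)

lemma t_1_1_6_8n_4: "t 1 1 6 (8 * n + 4) = 2 * t 1 1 3 n"
  using t_1_1_6_eq_mixed_reps[of "8 * n + 4"] t_1_1_3_eq_mixed_reps[of n] by (simp add: add.assoc)

lemma t_1_1_6_mod_4_3:
  assumes "n + 1 = 4 * k"
  shows "t 1 1 6 n = 8 * mixed_reps k"
  using t_1_1_6_eq_mixed_reps[of n] mixed_reps_mult_4[of k] by (simp add: assms)

lemma t_1_1_6_32n_19: "t 1 1 6 (32 * n + 19) = 4 * t 1 1 3 n"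
  using t_1_1_6_mod_4_3[of "32 * n + 19" "8 * n + 5"] t_1_1_3_eq_mixed_reps[of n] by simp

lemma t_1_1_6_mod_4_1_2:
  assumes "n mod 4 = 1 \<or> n mod 4 = 2"
  shows "t 1 1 6 n = 4 * N 1 1 3 (n + 1)"
proof -
  have "(n + 1) mod 4 = 2 \<or> (n + 1) mod 4 = 3" using assms by presburger
  then show ?thesis using t_1_1_6_eq_mixed_reps[of n] N_1_1_3_mod_4_2_3 by simp
qed

lemma t_1_1_6_mod_8_0:
  assumes "n mod 8 = 0"
  shows "t 1 1 6 n = 2 * N 1 1 3 (n + 1)"
proof -
  have "(n + 1) mod 8 = 1" using assms by presburger
  then show ?thesis using t_1_1_6_eq_mixed_reps[of n] N_1_1_3_mod_8_1 by simp
qed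

lemma t_1_1_6_mod_8_4:
  assumes "n mod 8 = 4"
  shows "t 1 1 6 n = N 1 1 3 (n + 1)"
proof -
  have "(n + 1) mod 8 = 5" using assms by presburger
  then show ?thesis using t_1_1_6_eq_mixed_reps[of n] N_1_1_3_mod_8_5(1) by simp
qed

lemma t_1_1_6_mod_32_19:
  assumes "n mod 32 = 19"
  shows "t 1 1 6 n = N 1 1 3 (n + 1)"
proof -
  define k where "k = (n + 1) div 4"
  have "n + 1 = 4 * k" "k mod 8 = 5" unfolding k_def using assms by presburger+
  then show ?thesis using t_1_1_6_mod_4_3 N_1_1_3_mult_4[of k] N_1_1_3_mod_8_5(1) by simp
qed

lemma t_1_1_6_mod_16_7_11:
  assumes "n mod 16 = 7 \<or> n mod 16 = 11"
  shows "5 * t 1 1 6 n = 8 * N 1 1 3 (n + 1)"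
proof -
  define k where "k = (n + 1) div 4"
  have "n + 1 = 4 * k" "k mod 4 = 2 \<or> k mod 4 = 3" unfolding k_def using assms by presburger+
  then show ?thesis using t_1_1_6_mod_4_3 N_1_1_3_mult_4[of k] N_1_1_3_mod_4_2_3 by simp
qed

lemma t_1_1_6_mod_32_3:
  assumes "n mod 32 = 3"
  shows "3 * t 1 1 6 n = 4 * N 1 1 3 (n + 1)"
proof -
  define k where "k = (n + 1) div 4"
  have "n + 1 = 4 * k" "k mod 8 = 1" unfolding k_def using assms by presburger+
  then show ?thesis using t_1_1_6_mod_4_3 N_1_1_3_mult_4[of k] N_1_1_3_mod_8_1 by simp
qed

theorem theorem3p1:
  shows "(\<forall>n::int. n \<ge> 1 \<longrightarrow>
            N 1 1 6 (2 * n) = N 1 1 3 n \<and>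
            t 1 1 6 (8 * n + 4) = 2 * t 1 1 3 n \<and>
            t 1 1 6 (32 * n + 19) = 4 * t 1 1 3 n) \<and>
         (\<forall>n::int. n \<ge> 1 \<longrightarrow> n mod 16 \<noteq> 15 \<longrightarrow>
            ((n mod 4 = 1 \<or> n mod 4 = 2) \<longrightarrow> real (t 1 1 6 n) = 4 * real (N 1 1 3 (n + 1))) \<and>
            (n mod 8 = 0 \<longrightarrow> real (t 1 1 6 n) = 2 * real (N 1 1 3 (n + 1))) \<and>
            ((n mod 8 = 4 \<or> n mod 32 = 19) \<longrightarrow> real (t 1 1 6 n) = real (N 1 1 3 (n + 1))) \<and>
            ((n mod 16 = 7 \<or> n mod 16 = 11) \<longrightarrow> real (t 1 1 6 n) = 8 / 5 * real (N 1 1 3 (n + 1))) \<and>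
            (n mod 32 = 3 \<longrightarrow> real (t 1 1 6 n) = 4 / 3 * real (N 1 1 3 (n + 1))))"
proof (intro conjI allI impI)
  fix n :: int
  show "N 1 1 6 (2 * n) = N 1 1 3 n"
    using N_1_1_double[of 3 n] by simp
  show "t 1 1 6 (8 * n + 4) = 2 * t 1 1 3 n" "t 1 1 6 (32 * n + 19) = 4 * t 1 1 3 n"
    by (fact t_1_1_6_8n_4 t_1_1_6_32n_19)+
next
  fix n :: int
  show "n mod 4 = 1 \<or> n mod 4 = 2 \<Longrightarrow> real (t 1 1 6 n) = 4 * real (N 1 1 3 (n + 1))"
    "n mod 8 = 0 \<Longrightarrow> real (t 1 1 6 n) = 2 * real (N 1 1 3 (n + 1))"
    "n mod 8 = 4 \<or> n mod 32 = 19 \<Longrightarrow> real (t 1 1 6 n) = real (N 1 1 3 (n + 1))"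
    using t_1_1_6_mod_4_1_2 t_1_1_6_mod_8_0 t_1_1_6_mod_8_4 t_1_1_6_mod_32_19 by auto
  show "n mod 16 = 7 \<or> n mod 16 = 11 \<Longrightarrow> real (t 1 1 6 n) = 8 / 5 * real (N 1 1 3 (n + 1))"
    by (drule t_1_1_6_mod_16_7_11, drule arg_cong[where f = real]) simp
  show "n mod 32 = 3 \<Longrightarrow> real (t 1 1 6 n) = 4 / 3 * real (N 1 1 3 (n + 1))"
    by (drule t_1_1_6_mod_32_3, drule arg_cong[where f = real]) simp
qed

end
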